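(* Let $d$ be a positive integer, let $\kappa,\mu,\nu$ be $d$-partitions with $\mu\succ\kappa\prec\nu$, and let $m$ be a nonnegative integer such that $\kappa_d=0$ or $m=0$. Then there exists a unique $d$-partition $\rho$ such that the cell with entry $m$ and bottom-left, top-left, bottom-right, top-right corners $\kappa,\mu,\nu,\rho$ satisfies the $d$-RSK local rule.
   Context: Partitions: finite weakly decreasing sequences of positive integers, $\lambda_i=0$ for $i>\ell(\lambda)$; $d$-partitions have $\ell\le d$; $\alpha\prec\beta$ (also $\beta\succ\alpha$) means $\beta_1\ge\alpha_1\ge\beta_2\ge\alpha_2\ge\cdots$. The $d$-RSK local rule for a cell with entry $m$ and corners $\kappa$ (bottom-left), $\mu$ (top-left), $\nu$ (bottom-right), $\rho$ (top-right) requires: all four are $d$-partitions, $\mu\succ\kappa\prec\nu$, $\mu\prec\rho\succ\nu$, $m=0$ or $\kappa_d=0$, $\rho_1+\kappa_d=m+\min(\mu_d,\nu_d)+\max(\mu_1,\nu_1)$, and $\rho_i+\kappa_{i-1}=\min(\mu_{i-1},\nu_{i-1})+\max(\mu_i,\nu_i)$ for $2\le i\le d$. *)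

theory Defs
  imports Main
begin

definition is_partition :: "nat list \<Rightarrow> bool" where
  "is_partition xs \<longleftrightarrow> sorted_wrt (\<ge>) xs \<and> (\<forall>x\<in>set xs. 0 < x)"

text \<open>The i-th part (1-indexed), with lambda_i = 0 for i > length.\<close>
definition part :: "nat list \<Rightarrow> nat \<Rightarrow> nat" where
  "part xs i = (if 1 \<le> i \<and> i \<le> length xs then xs ! (i - 1) else 0)"

definition d_partition :: "nat \<Rightarrow> nat list \<Rightarrow> bool" where
  "d_partition d xs \<longleftrightarrow> is_partition xs \<and> length xs \<le> d"

text \<open>interlaces a b  means  a \<prec> b, i.e. b_1 \<ge> a_1 \<ge> b_2 \<ge> a_2 \<ge> ...\<close>
definition interlaces :: "nat list \<Rightarrow> nat list \<Rightarrow> bool" where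
  "interlaces a b \<longleftrightarrow> (\<forall>i\<ge>1. part a i \<le> part b i \<and> part b (Suc i) \<le> part a i)"

text \<open>d-RSK local rule for a cell with entry m and corners
  kappa (bottom-left), mu (top-left), nu (bottom-right), rho (top-right).\<close>
definition rsk_local :: "nat \<Rightarrow> nat \<Rightarrow> nat list \<Rightarrow> nat list \<Rightarrow> nat list \<Rightarrow> nat list \<Rightarrow> bool" where
  "rsk_local d m \<kappa> \<mu> \<nu> \<rho> \<longleftrightarrow>
     d_partition d \<kappa> \<and> d_partition d \<mu> \<and> d_partition d \<nu> \<and> d_partition d \<rho> \<and>
     interlaces \<kappa> \<mu> \<and> interlaces \<kappa> \<nu> \<and> interlaces \<mu> \<rho> \<and> interlaces \<nu> \<rho> \<and>
     (m = 0 \<or> part \<kappa> d = 0) \<and>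
     part \<rho> 1 + part \<kappa> d = m + min (part \<mu> d) (part \<nu> d) + max (part \<mu> 1) (part \<nu> 1) \<and>
     (\<forall>i. 2 \<le> i \<and> i \<le> d \<longrightarrow>
        part \<rho> i + part \<kappa> (i - 1) = min (part \<mu> (i - 1)) (part \<nu> (i - 1)) + max (part \<mu> i) (part \<nu> i))"

end

theory Submission
  imports Defs
begin

text \<open>Each equation of the local rule determines \<rho>_i from the other three corners, which
  gives uniqueness. For existence, \<kappa> \<prec> \<mu>, \<nu> yields
  max(\<mu>_i, \<nu>_i) \<le> \<kappa>_(i-1) \<le> min(\<mu>_(i-1), \<nu>_(i-1)), so the forced values satisfy
  max(\<mu>_i, \<nu>_i) \<le> \<rho>_i \<le> min(\<mu>_(i-1), \<nu>_(i-1)) (for i = 1 the lower bound uses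
  \<kappa>_d \<le> min(\<mu>_d, \<nu>_d)). Hence they are weakly decreasing, form a d-partition, and
  interlace with \<mu> and \<nu>.\<close>

lemma part_eq_0_if_length_less: "length xs < i \<Longrightarrow> part xs i = 0"
  by (simp add: part_def)

lemma part_Suc_eq_nth: "i < length xs \<Longrightarrow> part xs (Suc i) = xs ! i"
  by (simp add: part_def)

lemma part_gt_0_if_le_length:
  assumes "is_partition xs" "1 \<le> i" "i \<le> length xs"
  shows "0 < part xs i"
  using assms nth_mem[of "i - 1" xs] by (auto simp: is_partition_def part_def)

lemma partition_eqI:
  assumes xs: "is_partition xs" and ys: "is_partition ys"
    and parts: "\<And>i. 1 \<le> i \<Longrightarrow> part xs i = part ys i"
  shows "xs = ys"
proof -
  have "\<not> length as < length bs"
    if "is_partition bs" "\<And>i. 1 \<le> i \<Longrightarrow> part as i = part bs i" for as bs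
  proof
    assume "length as < length bs"
    then have "0 < part bs (Suc (length as))"
      using part_gt_0_if_le_length[OF \<open>is_partition bs\<close>] by simp
    moreover have "part as (Suc (length as)) = 0"
      by (simp add: part_eq_0_if_length_less)
    ultimately show False
      using that(2)[of "Suc (length as)"] by simp
  qed
  then have "length xs = length ys"
    using xs ys parts by (metis linorder_neqE_nat)
  then show ?thesis
  proof (rule nth_equalityI)
    fix i assume "i < length xs"
    then show "xs ! i = ys ! i"
      using parts[of "Suc i"] \<open>length xs = length ys\<close> by (simp add: part_Suc_eq_nth)
  qed
qed

lemma d_partition_eqI:
  assumes "d_partition d xs" "d_partition d ys"
    and "\<And>i. 1 \<le> i \<Longrightarrow> i \<le> d \<Longrightarrow> part xs i = part ys i"
  shows "xs = ys"
proof (rule partition_eqI)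
  fix i :: nat assume "1 \<le> i"
  show "part xs i = part ys i"
  proof (cases "i \<le> d")
    case False
    then show ?thesis
      using assms(1,2) by (simp add: d_partition_def part_eq_0_if_length_less)
  qed (use assms \<open>1 \<le> i\<close> in auto)
qed (use assms in \<open>auto simp: d_partition_def\<close>)

text \<open>Keep the positive values among f 1, ..., f d; since f is antitone they form an
  initial segment.\<close>
lemma d_partition_of_antimono:
  fixes f :: "nat \<Rightarrow> nat"
  assumes antimono: "\<And>i j. 1 \<le> i \<Longrightarrow> i \<le> j \<Longrightarrow> j \<le> d \<Longrightarrow> f j \<le> f i"
  obtains xs where "d_partition d xs" "\<And>i. 1 \<le> i \<Longrightarrow> i \<le> d \<Longrightarrow> part xs i = f i"
proof
  define ys where "ys = map f [1..<Suc d]"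
  define xs where "xs = takeWhile (\<lambda>x. 0 < x) ys"
  have ys_length: "length ys = d"
    by (simp add: ys_def)
  have ys_nth: "ys ! i = f (Suc i)" if "i < d" for i
    using that by (simp add: ys_def nth_map nth_upt del: upt_Suc)
  have "sorted_wrt (\<ge>) ys"
    unfolding sorted_wrt_iff_nth_less using antimono by (simp add: ys_length ys_nth)
  then show "d_partition d xs"
    unfolding xs_def d_partition_def is_partition_def
    by (auto simp: sorted_wrt_takeWhile ys_def dest: set_takeWhileD
        intro: order.trans[OF length_takeWhile_le])
  fix i :: nat assume i: "1 \<le> i" "i \<le> d"
  show "part xs i = f i"
  proof (cases "i \<le> length xs")
    case True
    then show ?thesis
      using i by (simp add: part_def xs_def takeWhile_nth ys_nth)
  next
    case False
    have len: "length xs < length ys"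
      using False i by (simp add: ys_def)
    then have "ys ! length xs = 0"
      using nth_length_takeWhile unfolding xs_def by blast
    then have "f (Suc (length xs)) = 0"
      using len ys_nth[of "length xs"] by (simp add: ys_length)
    then have "f i = 0"
      using antimono[of "Suc (length xs)" i] False i by simp
    then show ?thesis
      using False by (simp add: part_eq_0_if_length_less)
  qed
qed

lemma interlacesD:
  assumes "interlaces a b" "1 \<le> i"
  shows "part a i \<le> part b i" "part b (Suc i) \<le> part a i"
  using assms unfolding interlaces_def by blast+

lemma interlaces_d_partitionI:
  assumes "d_partition d a" "d_partition d b"
    and "\<And>i. 1 \<le> i \<Longrightarrow> i \<le> d \<Longrightarrow> part a i \<le> part b i"
    and "\<And>i. 1 \<le> i \<Longrightarrow> i < d \<Longrightarrow> part b (Suc i) \<le> part a i"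
  shows "interlaces a b"
  unfolding interlaces_def
proof (intro allI impI conjI)
  fix i :: nat assume "1 \<le> i"
  show "part a i \<le> part b i"
    using assms(1,3) \<open>1 \<le> i\<close>
    by (cases "i \<le> d") (auto simp: d_partition_def part_eq_0_if_length_less)
  show "part b (Suc i) \<le> part a i"
    using assms(2,4) \<open>1 \<le> i\<close>
    by (cases "i < d") (auto simp: d_partition_def part_eq_0_if_length_less)
qed

locale rsk_cell =
  fixes d m :: nat and \<kappa> \<mu> \<nu> :: "nat list"
  assumes d_pos: "0 < d"
    and \<kappa>_\<mu>: "interlaces \<kappa> \<mu>" and \<kappa>_\<nu>: "interlaces \<kappa> \<nu>"
begin

text \<open>The part \<rho>_i forced by the local rule; the truncated subtraction is harmless,
  since the subtrahend never exceeds the minimum on its left.\<close>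
definition rsk_part :: "nat \<Rightarrow> nat" where
  "rsk_part i =
    (if i = 1 then m + min (part \<mu> d) (part \<nu> d) + max (part \<mu> 1) (part \<nu> 1) - part \<kappa> d
     else min (part \<mu> (i - 1)) (part \<nu> (i - 1)) + max (part \<mu> i) (part \<nu> i) - part \<kappa> (i - 1))"

lemma part_\<kappa>_le_min: "1 \<le> i \<Longrightarrow> part \<kappa> i \<le> min (part \<mu> i) (part \<nu> i)"
  using interlacesD(1)[OF \<kappa>_\<mu>] interlacesD(1)[OF \<kappa>_\<nu>] by simp

lemma max_Suc_le_part_\<kappa>: "1 \<le> i \<Longrightarrow> max (part \<mu> (Suc i)) (part \<nu> (Suc i)) \<le> part \<kappa> i"
  using interlacesD(2)[OF \<kappa>_\<mu>] interlacesD(2)[OF \<kappa>_\<nu>] by simp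

lemma rsk_part_1:
  "rsk_part 1 + part \<kappa> d = m + min (part \<mu> d) (part \<nu> d) + max (part \<mu> 1) (part \<nu> 1)"
  using part_\<kappa>_le_min[of d] d_pos by (simp add: rsk_part_def) arith

lemma rsk_part_ge_2:
  assumes "2 \<le> i"
  shows "rsk_part i + part \<kappa> (i - 1) =
    min (part \<mu> (i - 1)) (part \<nu> (i - 1)) + max (part \<mu> i) (part \<nu> i)"
  using part_\<kappa>_le_min[of "i - 1"] assms by (simp add: rsk_part_def) arith

lemma max_le_rsk_part:
  assumes "1 \<le> i"
  shows "max (part \<mu> i) (part \<nu> i) \<le> rsk_part i"
proof (cases "i = 1")
  case True
  have "part \<kappa> d \<le> min (part \<mu> d) (part \<nu> d)"
    using d_pos by (intro part_\<kappa>_le_min) simp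
  with rsk_part_1 show ?thesis
    unfolding True by linarith
next
  case False
  then have "2 \<le> i"
    using assms by simp
  then show ?thesis
    using rsk_part_ge_2[OF \<open>2 \<le> i\<close>] part_\<kappa>_le_min[of "i - 1"] by linarith
qed

lemma rsk_part_Suc_le_min:
  assumes "1 \<le> i"
  shows "rsk_part (Suc i) \<le> min (part \<mu> i) (part \<nu> i)"
proof -
  have "rsk_part (Suc i) + part \<kappa> i =
      min (part \<mu> i) (part \<nu> i) + max (part \<mu> (Suc i)) (part \<nu> (Suc i))"
    using rsk_part_ge_2[of "Suc i"] assms by simp
  then show ?thesis
    using max_Suc_le_part_\<kappa>[OF assms] by linarith
qed

lemma rsk_part_antimono:
  assumes "1 \<le> i" "i \<le> j"
  shows "rsk_part j \<le> rsk_part i"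
  using assms(2,1)
proof (induction j rule: dec_induct)
  case (step k)
  then show ?case
    using rsk_part_Suc_le_min[of k] max_le_rsk_part[of k] by simp
qed simp

lemma rsk_local_iff:
  assumes "d_partition d \<kappa>" "d_partition d \<mu>" "d_partition d \<nu>" "part \<kappa> d = 0 \<or> m = 0"
  shows "rsk_local d m \<kappa> \<mu> \<nu> \<rho> \<longleftrightarrow>
    d_partition d \<rho> \<and> (\<forall>i. 1 \<le> i \<and> i \<le> d \<longrightarrow> part \<rho> i = rsk_part i)"
proof
  assume rule: "rsk_local d m \<kappa> \<mu> \<nu> \<rho>"
  have "part \<rho> i = rsk_part i" if "1 \<le> i" "i \<le> d" for i
  proof (cases "i = 1")
    case True
    then show ?thesis
      using rule rsk_part_1 by (simp add: rsk_local_def)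
  next
    case False
    then have "part \<rho> i + part \<kappa> (i - 1) =
        min (part \<mu> (i - 1)) (part \<nu> (i - 1)) + max (part \<mu> i) (part \<nu> i)"
      using rule that unfolding rsk_local_def by auto
    then show ?thesis
      using rsk_part_ge_2[of i] False that by simp
  qed
  then show "d_partition d \<rho> \<and> (\<forall>i. 1 \<le> i \<and> i \<le> d \<longrightarrow> part \<rho> i = rsk_part i)"
    using rule by (simp add: rsk_local_def)
next
  assume \<rho>: "d_partition d \<rho> \<and> (\<forall>i. 1 \<le> i \<and> i \<le> d \<longrightarrow> part \<rho> i = rsk_part i)"
  have "interlaces \<alpha> \<rho>" if "d_partition d \<alpha>"
    and "\<And>i. 1 \<le> i \<Longrightarrow> part \<alpha> i \<le> rsk_part i"
    and "\<And>i. 1 \<le> i \<Longrightarrow> rsk_part (Suc i) \<le> part \<alpha> i" for \<alpha>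
    using that \<rho> by (intro interlaces_d_partitionI[of d]) auto
  then have "interlaces \<mu> \<rho>" "interlaces \<nu> \<rho>"
    using assms(2,3) max_le_rsk_part rsk_part_Suc_le_min by fastforce+
  then show "rsk_local d m \<kappa> \<mu> \<nu> \<rho>"
    using assms \<rho> \<kappa>_\<mu> \<kappa>_\<nu> rsk_part_1 rsk_part_ge_2 d_pos
    unfolding rsk_local_def by auto
qed

end

theorem lemma6p1:
  fixes d m :: nat and \<kappa> \<mu> \<nu> :: "nat list"
  assumes "0 < d"
    and "d_partition d \<kappa>" and "d_partition d \<mu>" and "d_partition d \<nu>"
    and "interlaces \<kappa> \<mu>" and "interlaces \<kappa> \<nu>"
    and "part \<kappa> d = 0 \<or> m = 0"
  shows "\<exists>!\<rho>. rsk_local d m \<kappa> \<mu> \<nu> \<rho>"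
proof -
  interpret rsk_cell d m \<kappa> \<mu> \<nu>
    using assms by unfold_locales
  obtain \<rho> where "d_partition d \<rho>" "\<And>i. 1 \<le> i \<Longrightarrow> i \<le> d \<Longrightarrow> part \<rho> i = rsk_part i"
    using d_partition_of_antimono[of d rsk_part] rsk_part_antimono by blast
  then show ?thesis
    unfolding rsk_local_iff[OF assms(2-4,7)]
    by (metis d_partition_eqI)
qed

end
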